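(* Let $D=\{D_1,\dots,D_n\}$ be a set of pairwise disjoint closed balls in $\mathbb{R}^d$ and $s>0$. The set $W$ output by the algorithm ComputeWSPD$(D,s)$ described below is a WSPD for $D$ with respect to $s$.
   Context: Ball $D_i$ has center $c_i$ and radius $r_i\ge0$. $R(X)$ is the smallest axis-parallel box containing $X$, $L_{\max}(R)$ its longest side length; for balls $C,C'$ with centers $c,c'$ and radii $r,r'$, $d(C,C')=|cc'|-(r+r')$. Point-set well-separation: finite $P,Q$ are $s$-well-separated if there are disjoint balls $C_P\supseteq R(P)$, $C_Q\supseteq R(Q)$ of equal radius $\rho$ with $d(C_P,C_Q)\ge s\rho$. Ball well-separation: for $X\subseteq D$ let $X'=\{c_i:D_i\in X\}$; nonempty $A,B\subseteq D$ are $s$-well-separated if there are disjoint balls $C_{A'}\supseteq R(A')$, $C_{B'}\supseteq R(B')$ of equal radius with one of: (i) $|A|=|B|=1$; (ii) $A=\{D_k\}$, $|B|>1$, $d(c_k,C_{B'})-r_k\ge(3s+4)\mathrm{radius}(C_{B'})$; (iii) symmetric to (ii); (iv) $|A|,|B|>1$ and $d(C_{A'},C_{B'})\ge(3s+4)\mathrm{radius}(C_{A'})$ (if all balls of $A\cup B$ have radius $0$, the point-set notion for $A',B'$ is used instead). A WSPD for $D$ w.r.t. $s$ is a set of pairs $\{A_i,B_i\}$ of nonempty subsets of $D$, each $s$-well-separated, such that every two distinct balls $D_p,D_q$ are separated (one in $A_i$, other in $B_i$) by exactly one pair. Algorithm ComputeWSPD$(D,s)$: let $F=\{c_1,\dots,c_n\}$;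 let $T$ be a (Callahan–Kosaraju) split tree of $F$: a binary tree whose leaves are the points of $F$, each node $u$ storing $R(S_u)$ where $S_u$ is the set of points at leaves of the subtree of $u$; let $W'$ be the WSPD of $F$ w.r.t. $3s+6$ computed from $T$ by the Callahan–Kosaraju algorithm (each pair is $\{S_v,S_w\}$ for nodes $v,w$ of $T$). For $X'\subseteq F$ let $X$ denote the set of balls whose centers lie in $X'$. Start with $W=\emptyset$; for each $\{A',B'\}\in W'$: if $|A'|=|B'|=1$ or $|A'|,|B'|>1$, add $\{A,B\}$ to $W$; otherwise, say $A'=\{c_k\}=S_v$ ($v$ a leaf) and $B'=S_w$, add to $W$ the pairs produced by FindPairs$(v,w)$. FindPairs$(v,w)$ with $S_v=\{c_k\}$: let $C_w$ be the ball of radius $(\sqrt d/2)L_{\max}(R(S_w))$ centered at the center of $R(S_w)$; if $d(c_k,C_w)-r_k\ge(3s+4)\,\mathrm{radius}(C_w)$, return the single pair $\{\{D_k\},\text{balls with centers in }S_w\}$; otherwise return the union of FindPairs$(v,w_l)$ and FindPairs$(v,w_r)$ for the two children $w_l,w_r$ of $w$. *)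

theory Defs
  imports "HOL-Analysis.Analysis" "HOL-Library.Uprod"
begin

(* A ball D_i is represented by the pair (center, radius) :: 'a \<times> real;
   the ball itself is cball (fst b) (snd b). *)

definition bb_lo :: "'a::euclidean_space set \<Rightarrow> 'a" where
  "bb_lo X = (\<Sum>i\<in>Basis. (INF x\<in>X. x \<bullet> i) *\<^sub>R i)"

definition bb_hi :: "'a::euclidean_space set \<Rightarrow> 'a" where
  "bb_hi X = (\<Sum>i\<in>Basis. (SUP x\<in>X. x \<bullet> i) *\<^sub>R i)"

definition rbox :: "'a::euclidean_space set \<Rightarrow> 'a set" where
  "rbox X = cbox (bb_lo X) (bb_hi X)"

definition lmax :: "'a::euclidean_space set \<Rightarrow> real" where
  "lmax X = Max ((\<lambda>i. (SUP x\<in>X. x \<bullet> i) - (INF x\<in>X. x \<bullet> i)) ` Basis)"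

definition bcenter :: "'a::euclidean_space set \<Rightarrow> 'a" where
  "bcenter X = (1/2) *\<^sub>R (bb_lo X + bb_hi X)"

definition pt_ws :: "real \<Rightarrow> 'a::euclidean_space set \<Rightarrow> 'a set \<Rightarrow> bool" where
  "pt_ws s P Q \<longleftrightarrow> (\<exists>cp cq \<rho>. \<rho> \<ge> 0 \<and> rbox P \<subseteq> cball cp \<rho> \<and> rbox Q \<subseteq> cball cq \<rho> \<and>
      cball cp \<rho> \<inter> cball cq \<rho> = {} \<and> dist cp cq - (\<rho> + \<rho>) \<ge> s * \<rho>)"

definition ball_ws :: "real \<Rightarrow> ('a::euclidean_space \<times> real) set \<Rightarrow> ('a \<times> real) set \<Rightarrow> bool" where
  "ball_ws s A B \<longleftrightarrow> A \<noteq> {} \<and> B \<noteq> {} \<and>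
    (if (\<forall>b\<in>A \<union> B. snd b = 0) then pt_ws s (fst ` A) (fst ` B)
     else (\<exists>ca cb \<rho>. \<rho> \<ge> 0 \<and> rbox (fst ` A) \<subseteq> cball ca \<rho> \<and> rbox (fst ` B) \<subseteq> cball cb \<rho> \<and>
        cball ca \<rho> \<inter> cball cb \<rho> = {} \<and>
        ((card A = 1 \<and> card B = 1)
         \<or> (\<exists>k. A = {k} \<and> card B > 1 \<and> dist (fst k) cb - (0 + \<rho>) - snd k \<ge> (3 * s + 4) * \<rho>)
         \<or> (\<exists>k. B = {k} \<and> card A > 1 \<and> dist (fst k) ca - (0 + \<rho>) - snd k \<ge> (3 * s + 4) * \<rho>)
         \<or> (card A > 1 \<and> card B > 1 \<and> dist ca cb - (\<rho> + \<rho>) \<ge> (3 * s + 4) * \<rho>))))"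

definition is_wspd :: "('a::euclidean_space \<times> real) set \<Rightarrow> real \<Rightarrow> ('a \<times> real) set uprod set \<Rightarrow> bool" where
  "is_wspd D s W \<longleftrightarrow>
     (\<forall>w\<in>W. \<exists>A B. w = Upair A B \<and> A \<subseteq> D \<and> B \<subseteq> D \<and> ball_ws s A B) \<and>
     (\<forall>p\<in>D. \<forall>q\<in>D. p \<noteq> q \<longrightarrow> (\<exists>!w. w \<in> W \<and> (\<exists>A B. w = Upair A B \<and> p \<in> A \<and> q \<in> B)))"

datatype 'p stree = Leaf 'p | Node "'p stree" "'p stree"

fun leaves :: "'p stree \<Rightarrow> 'p list" where
  "leaves (Leaf p) = [p]"
| "leaves (Node l r) = leaves l @ leaves r"

definition pts :: "'p stree \<Rightarrow> 'p set" where
  "pts t = set (leaves t)"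

definition is_split_tree :: "'p set \<Rightarrow> 'p stree \<Rightarrow> bool" where
  "is_split_tree F T \<longleftrightarrow> pts T = F \<and> distinct (leaves T)"

text \<open>Radius of the ball C_u enclosing R(S_u): (sqrt d / 2) L_max(R(S_u)).\<close>
definition crad :: "'a::euclidean_space stree \<Rightarrow> real" where
  "crad u = sqrt (real DIM('a)) / 2 * lmax (pts u)"

definition ck_sep :: "real \<Rightarrow> 'a::euclidean_space stree \<Rightarrow> 'a stree \<Rightarrow> bool" where
  "ck_sep s v w \<longleftrightarrow> (let \<rho> = max (crad v) (crad w) in
      dist (bcenter (pts v)) (bcenter (pts w)) - (\<rho> + \<rho>) \<ge> s * \<rho>)"

function ck_pairs :: "real \<Rightarrow> 'a::euclidean_space stree \<Rightarrow> 'a stree \<Rightarrow> ('a stree \<times> 'a stree) list" where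
  "ck_pairs s (Leaf p) (Leaf q) =
     (if ck_sep s (Leaf p) (Leaf q) then [(Leaf p, Leaf q)] else [])"
| "ck_pairs s (Leaf p) (Node wl wr) =
     (if ck_sep s (Leaf p) (Node wl wr) then [(Leaf p, Node wl wr)]
      else ck_pairs s (Leaf p) wl @ ck_pairs s (Leaf p) wr)"
| "ck_pairs s (Node vl vr) (Leaf q) =
     (if ck_sep s (Node vl vr) (Leaf q) then [(Node vl vr, Leaf q)]
      else ck_pairs s vl (Leaf q) @ ck_pairs s vr (Leaf q))"
| "ck_pairs s (Node vl vr) (Node wl wr) =
     (if ck_sep s (Node vl vr) (Node wl wr) then [(Node vl vr, Node wl wr)]
      else if lmax (pts (Node vl vr)) \<le> lmax (pts (Node wl wr))
        then ck_pairs s (Node vl vr) wl @ ck_pairs s (Node vl vr) wr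
        else ck_pairs s vl (Node wl wr) @ ck_pairs s vr (Node wl wr))"
  by pat_completeness auto
termination
  by (relation "Wellfounded.measure (\<lambda>(s, v, w). size v + size w)") auto

fun ck_wspd :: "real \<Rightarrow> 'a::euclidean_space stree \<Rightarrow> ('a stree \<times> 'a stree) list" where
  "ck_wspd s (Leaf p) = []"
| "ck_wspd s (Node l r) = ck_wspd s l @ ck_wspd s r @ ck_pairs s l r"

definition balls_of :: "('a \<times> real) set \<Rightarrow> 'a set \<Rightarrow> ('a \<times> real) set" where
  "balls_of D X = {b \<in> D. fst b \<in> X}"

definition the_ball :: "('a \<times> real) set \<Rightarrow> 'a stree \<Rightarrow> 'a \<times> real" where
  "the_ball D v = (THE b. b \<in> D \<and> fst b \<in> pts v)"

fun find_pairs :: "real \<Rightarrow> ('a::euclidean_space \<times> real) \<Rightarrow> 'a stree \<Rightarrow> 'a stree list" where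
  "find_pairs s k w =
     (if dist (fst k) (bcenter (pts w)) - (0 + crad w) - snd k \<ge> (3 * s + 4) * crad w then [w]
      else (case w of Leaf _ \<Rightarrow> [] | Node wl wr \<Rightarrow> find_pairs s k wl @ find_pairs s k wr))"

definition compute_wspd :: "('a::euclidean_space \<times> real) set \<Rightarrow> real \<Rightarrow> 'a stree \<Rightarrow> ('a \<times> real) set uprod set" where
  "compute_wspd D s T = (let W' = set (ck_wspd (3 * s + 6) T) in
     {Upair (balls_of D (pts v)) (balls_of D (pts w)) | v w. (v, w) \<in> W' \<and>
        ((card (pts v) = 1 \<and> card (pts w) = 1) \<or> (card (pts v) > 1 \<and> card (pts w) > 1))}
   \<union> {Upair {the_ball D v} (balls_of D (pts x)) | v w x. (v, w) \<in> W' \<and>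
        card (pts v) = 1 \<and> card (pts w) > 1 \<and> x \<in> set (find_pairs s (the_ball D v) w)}
   \<union> {Upair {the_ball D w} (balls_of D (pts x)) | v w x. (v, w) \<in> W' \<and>
        card (pts w) = 1 \<and> card (pts v) > 1 \<and> x \<in> set (find_pairs s (the_ball D w) v)})"

end

theory Submission
  imports Defs
begin

text \<open>
  The Callahan--Kosaraju pairs of the centres for separation 3s+6 have leaf sets that cover every
  ordered pair of distinct centres exactly once. ComputeWSPD keeps a pair whose sides are both
  singletons or both large; in the latter case the separation 3s+6 of the enclosing balls exceeds
  the required 3s+4. A pair with a single centre c_k on one side is refined by FindPairs, whose
  output nodes partition the other side: a leaf c always passes the test r_k \<le> |c_k c| because the
  balls are disjoint. Disjointness also makes the centres distinct, so the exact cover by pairs of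
  centres transfers to an exact cover by pairs of balls, which is the uniqueness clause of a WSPD.
\<close>

section \<open>Bounding boxes and well-separated pairs of balls\<close>

lemma disjoint_cballI: "r + r' < dist a b \<Longrightarrow> cball a r \<inter> cball b r' = {}"
  by (auto simp: mem_cball) (smt (verit) dist_commute dist_triangle)

lemma bb_lo_singleton [simp]: "bb_lo {z} = z"
  by (simp add: bb_lo_def euclidean_representation)

lemma bb_hi_singleton [simp]: "bb_hi {z} = z"
  by (simp add: bb_hi_def euclidean_representation)

lemma rbox_singleton [simp]: "rbox {z} = {z}"
  by (simp add: rbox_def)

lemma bcenter_singleton [simp]: "bcenter {z} = z"
  by (simp add: bcenter_def scaleR_2[symmetric])

lemma lmax_singleton [simp]: "lmax {z} = 0"
  by (simp add: lmax_def)

lemma side_le_lmax: "i \<in> Basis \<Longrightarrow> (SUP x\<in>X. x \<bullet> i) - (INF x\<in>X. x \<bullet> i) \<le> lmax X"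
  unfolding lmax_def by (intro Max_ge) auto

lemma lmax_pos:
  fixes X :: "'a::euclidean_space set"
  assumes "finite X" "card X > 1"
  shows "0 < lmax X"
proof -
  obtain x y where xy: "x \<in> X" "y \<in> X" "x \<noteq> y"
    using assms by (metis One_nat_def card_le_Suc0_iff_eq not_le)
  then obtain i where i: "i \<in> Basis" "x \<bullet> i \<noteq> y \<bullet> i" using euclidean_eqI by blast
  have "(INF x\<in>X. x \<bullet> i) \<le> x \<bullet> i" "(INF x\<in>X. x \<bullet> i) \<le> y \<bullet> i"
    using xy assms by (auto intro: cInf_le_finite)
  moreover have "x \<bullet> i \<le> (SUP x\<in>X. x \<bullet> i)" "y \<bullet> i \<le> (SUP x\<in>X. x \<bullet> i)"
    using xy assms by (auto intro: le_cSup_finite)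
  ultimately show ?thesis using i side_le_lmax[OF i(1), of X] by linarith
qed

lemma rbox_subset_cball:
  fixes X :: "'a::euclidean_space set"
  shows "rbox X \<subseteq> cball (bcenter X) (sqrt DIM('a) / 2 * lmax X)"
proof
  fix y assume "y \<in> rbox X"
  then have y: "bb_lo X \<bullet> i \<le> y \<bullet> i \<and> y \<bullet> i \<le> bb_hi X \<bullet> i" if "i \<in> Basis" for i
    using that by (auto simp: rbox_def mem_box)
  have "\<bar>(bcenter X - y) \<bullet> i\<bar> \<le> lmax X / 2" if i: "i \<in> Basis" for i
  proof -
    have "(bcenter X - y) \<bullet> i = (bb_lo X \<bullet> i + bb_hi X \<bullet> i) / 2 - y \<bullet> i"
      by (simp add: bcenter_def inner_diff_left inner_add_left)
    moreover have "bb_hi X \<bullet> i - bb_lo X \<bullet> i \<le> lmax X"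
      using side_le_lmax[OF i, of X] i by (simp add: bb_lo_def bb_hi_def)
    ultimately show ?thesis using y[OF i] by (auto simp: abs_le_iff field_simps)
  qed
  then have "infnorm (bcenter X - y) \<le> lmax X / 2"
    unfolding infnorm_Max by (intro Max.boundedI) auto
  then have "norm (bcenter X - y) \<le> sqrt DIM('a) * (lmax X / 2)"
    using norm_le_infnorm[of "bcenter X - y"]
    by (meson mult_left_mono order_trans real_sqrt_ge_zero of_nat_0_le_iff)
  then show "y \<in> cball (bcenter X) (sqrt DIM('a) / 2 * lmax X)"
    by (simp add: dist_norm)
qed

text \<open>The witness also satisfies the point-set clause, so the case split of ball_ws on
  vanishing radii is immaterial.\<close>

lemma ball_wsI:
  assumes "A \<noteq> {}" "B \<noteq> {}" "0 \<le> \<rho>" "rbox (fst ` A) \<subseteq> cball ca \<rho>" "rbox (fst ` B) \<subseteq> cball cb \<rho>"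
    and "\<rho> + \<rho> < dist ca cb" "s * \<rho> \<le> dist ca cb - (\<rho> + \<rho>)"
    and "(card A = 1 \<and> card B = 1)
      \<or> (\<exists>k. A = {k} \<and> card B > 1 \<and> dist (fst k) cb - (0 + \<rho>) - snd k \<ge> (3 * s + 4) * \<rho>)
      \<or> (card A > 1 \<and> card B > 1 \<and> dist ca cb - (\<rho> + \<rho>) \<ge> (3 * s + 4) * \<rho>)"
  shows "ball_ws s A B"
proof -
  have "cball ca \<rho> \<inter> cball cb \<rho> = {}" using disjoint_cballI[OF assms(6)] .
  with assms show ?thesis
    unfolding ball_ws_def pt_ws_def by (simp only: if_bool_eq_conj) (intro conjI impI; blast)
qed

lemma ball_ws_singletons: "fst p \<noteq> fst q \<Longrightarrow> ball_ws s {p} {q}"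
  by (rule ball_wsI[where \<rho>=0]) auto

lemma ball_ws_singleton_far:
  assumes "card B > 1" "rbox (fst ` B) \<subseteq> cball cb \<rho>" "0 < \<rho>" "0 \<le> s" "0 \<le> snd k"
    and far: "(3 * s + 4) * \<rho> \<le> dist (fst k) cb - (0 + \<rho>) - snd k"
  shows "ball_ws s {k} B"
proof -
  have "(3 * s + 4) * \<rho> = 3 * (s * \<rho>) + 4 * \<rho>" "0 \<le> s * \<rho>"
    using assms by (auto simp: algebra_simps)
  then have "\<rho> + \<rho> < dist (fst k) cb" "s * \<rho> \<le> dist (fst k) cb - (\<rho> + \<rho>)"
    using far assms(3,5) by linarith+
  then show ?thesis
    by (intro ball_wsI[where ca="fst k" and cb=cb and \<rho>=\<rho>]) (use assms in auto)
qed

lemma ball_ws_far: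
  assumes "card A > 1" "card B > 1" "rbox (fst ` A) \<subseteq> cball ca \<rho>" "rbox (fst ` B) \<subseteq> cball cb \<rho>"
    "0 < \<rho>" "0 \<le> s" and far: "(3 * s + 6) * \<rho> \<le> dist ca cb - (\<rho> + \<rho>)"
  shows "ball_ws s A B"
proof -
  have "(3 * s + 6) * \<rho> = 3 * (s * \<rho>) + 6 * \<rho>" "(3 * s + 4) * \<rho> = 3 * (s * \<rho>) + 4 * \<rho>"
    "0 \<le> s * \<rho>"
    using assms by (auto simp: algebra_simps)
  then have "\<rho> + \<rho> < dist ca cb" "s * \<rho> \<le> dist ca cb - (\<rho> + \<rho>)"
    "(3 * s + 4) * \<rho> \<le> dist ca cb - (\<rho> + \<rho>)"
    using far assms(5) by linarith+
  then show ?thesis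
    by (intro ball_wsI[where ca=ca and cb=cb and \<rho>=\<rho>]) (use assms in auto)
qed

section \<open>Exact covers\<close>

definition exact_cover :: "('i \<Rightarrow> 'z set) \<Rightarrow> 'i set \<Rightarrow> 'z set \<Rightarrow> bool" where
  "exact_cover F I S \<longleftrightarrow> (\<forall>i\<in>I. F i \<subseteq> S) \<and> (\<forall>z\<in>S. \<exists>!i. i \<in> I \<and> z \<in> F i)"

lemma exact_cover_empty [simp]: "exact_cover F {} {}"
  by (simp add: exact_cover_def)

lemma exact_cover_singleton [simp]: "exact_cover F {i} (F i)"
  by (auto simp: exact_cover_def)

lemma exact_cover_Un:
  assumes I: "exact_cover F I S" and J: "exact_cover F J S'" and disj: "S \<inter> S' = {}"
  shows "exact_cover F (I \<union> J) (S \<union> S')"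
  unfolding exact_cover_def
proof (intro conjI ballI)
  show "F i \<subseteq> S \<union> S'" if "i \<in> I \<union> J" for i
    using that I J by (auto simp: exact_cover_def)
  fix z assume "z \<in> S \<union> S'"
  then show "\<exists>!i. i \<in> I \<union> J \<and> z \<in> F i"
  proof
    assume "z \<in> S"
    then have "\<exists>!i. i \<in> I \<and> z \<in> F i" "\<forall>j\<in>J. z \<notin> F j"
      using I J disj unfolding exact_cover_def by blast+
    then show ?thesis by blast
  next
    assume "z \<in> S'"
    then have "\<exists>!i. i \<in> J \<and> z \<in> F i" "\<forall>j\<in>I. z \<notin> F j"
      using I J disj unfolding exact_cover_def by blast+
    then show ?thesis by blast
  qed
qed

lemma exact_cover_UN:
  assumes I: "exact_cover F I S" and J: "\<And>i. i \<in> I \<Longrightarrow> exact_cover F (J i) (F i)"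
  shows "exact_cover F (\<Union>i\<in>I. J i) S"
  unfolding exact_cover_def
proof (intro conjI ballI)
  show "F j \<subseteq> S" if "j \<in> (\<Union>i\<in>I. J i)" for j
    using that I J by (fastforce simp: exact_cover_def)
  fix z assume "z \<in> S"
  then obtain i where i: "i \<in> I" "z \<in> F i" and uniq: "\<And>i'. i' \<in> I \<Longrightarrow> z \<in> F i' \<Longrightarrow> i' = i"
    using I unfolding exact_cover_def by blast
  have "\<exists>!j. j \<in> J i \<and> z \<in> F j"
    using i J by (auto simp: exact_cover_def)
  moreover have "j \<in> J i" if "j \<in> J i'" "i' \<in> I" "z \<in> F j" for i' j
    using that J[of i'] uniq by (auto simp: exact_cover_def)
  ultimately show "\<exists>!j. j \<in> (\<Union>i\<in>I. J i) \<and> z \<in> F j"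
    using i(1) by blast
qed

lemma exact_cover_image:
  assumes "exact_cover (F \<circ> g) I S"
  shows "exact_cover F (g ` I) S"
  unfolding exact_cover_def
proof (intro conjI ballI)
  show "F j \<subseteq> S" if "j \<in> g ` I" for j
    using that assms by (auto simp: exact_cover_def)
  fix z assume "z \<in> S"
  then obtain i where "i \<in> I" "z \<in> F (g i)" "\<And>i'. i' \<in> I \<Longrightarrow> z \<in> F (g i') \<Longrightarrow> i' = i"
    using assms unfolding exact_cover_def comp_def by blast
  then show "\<exists>!j. j \<in> g ` I \<and> z \<in> F j" by blast
qed

lemma exact_cover_vimage:
  assumes "exact_cover F I S"
  shows "exact_cover (\<lambda>i. h -` F i \<inter> Z) I (h -` S \<inter> Z)"
  unfolding exact_cover_def
proof (intro conjI ballI)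
  show "h -` F i \<inter> Z \<subseteq> h -` S \<inter> Z" if "i \<in> I" for i
    using that assms by (auto simp: exact_cover_def)
  fix z assume "z \<in> h -` S \<inter> Z"
  then show "\<exists>!i. i \<in> I \<and> z \<in> h -` F i \<inter> Z"
    using assms by (simp add: exact_cover_def)
qed

lemma exact_cover_Times:
  assumes "exact_cover F I S"
  shows "exact_cover (\<lambda>i. A \<times> F i) I (A \<times> S)"
  unfolding exact_cover_def
proof (intro conjI ballI)
  show "A \<times> F i \<subseteq> A \<times> S" if "i \<in> I" for i
    using that assms by (auto simp: exact_cover_def)
  fix z assume "z \<in> A \<times> S"
  then show "\<exists>!i. i \<in> I \<and> z \<in> A \<times> F i"
    using assms by (auto simp: exact_cover_def)
qed

lemma exact_cover_symmetric:
  assumes cover: "exact_cover F I S" and asym: "S \<inter> S\<inverse> = {}"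
  shows "exact_cover (\<lambda>i. F i \<union> (F i)\<inverse>) I (S \<union> S\<inverse>)"
  unfolding exact_cover_def
proof (intro conjI ballI)
  show "F i \<union> (F i)\<inverse> \<subseteq> S \<union> S\<inverse>" if "i \<in> I" for i
    using that cover by (auto simp: exact_cover_def)
  have "z \<in> F i \<union> (F i)\<inverse> \<longleftrightarrow> z \<in> F i" if "z \<in> S" "i \<in> I" for z i
    using that cover asym by (auto simp: exact_cover_def)
  moreover have "z \<in> F i \<union> (F i)\<inverse> \<longleftrightarrow> z \<in> (F i)\<inverse>" if "z \<in> S\<inverse>" "i \<in> I" for z i
    using that cover asym by (auto simp: exact_cover_def)
  moreover have "\<exists>!i. i \<in> I \<and> z \<in> (F i)\<inverse>" if "z \<in> S\<inverse>" for z
    using that cover by (cases z) (simp add: exact_cover_def)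
  ultimately show "\<exists>!i. i \<in> I \<and> z \<in> F i \<union> (F i)\<inverse>" if "z \<in> S \<union> S\<inverse>" for z
    using that cover unfolding exact_cover_def by (metis (no_types, lifting) UnE)
qed

section \<open>Split trees and the Callahan--Kosaraju pairs\<close>

lemma pts_Leaf [simp]: "pts (Leaf p) = {p}"
  by (simp add: pts_def)

lemma pts_Node [simp]: "pts (Node l r) = pts l \<union> pts r"
  by (simp add: pts_def)

lemma finite_pts [simp]: "finite (pts t)"
  by (simp add: pts_def)

lemma pts_nonempty [simp]: "pts t \<noteq> {}"
  by (induction t) auto

lemma card_pts_ge_1: "1 \<le> card (pts t)"
  by (simp add: Suc_le_eq card_gt_0_iff)

lemma set_leaves [simp]: "set (leaves t) = pts t"
  by (simp add: pts_def)

fun subtrees :: "'p stree \<Rightarrow> 'p stree set" where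
  "subtrees (Leaf p) = {Leaf p}"
| "subtrees (Node l r) = insert (Node l r) (subtrees l \<union> subtrees r)"

lemma pts_subtree: "x \<in> subtrees t \<Longrightarrow> pts x \<subseteq> pts t"
  by (induction t) auto

lemma distinct_leaves_subtree: "x \<in> subtrees t \<Longrightarrow> distinct (leaves t) \<Longrightarrow> distinct (leaves x)"
  by (induction t) auto

lemma crad_Leaf [simp]: "crad (Leaf p) = 0"
  by (simp add: crad_def)

lemma ck_sep_Leaf_Leaf [simp]: "ck_sep s (Leaf p) (Leaf q)"
  by (simp add: ck_sep_def)

lemma crad_pos: "1 < card (pts x) \<Longrightarrow> 0 < crad x"
  unfolding crad_def using lmax_pos[of "pts x"] by simp

lemma rbox_subset_cball_crad: "rbox (pts x) \<subseteq> cball (bcenter (pts x)) (crad x)"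
  unfolding crad_def by (rule rbox_subset_cball)

definition leaf_pairs :: "'p stree \<times> 'p stree \<Rightarrow> ('p \<times> 'p) set" where
  "leaf_pairs vw = pts (fst vw) \<times> pts (snd vw)"

lemma leaf_pairs_Pair [simp]: "leaf_pairs (x, y) = pts x \<times> pts y"
  by (simp add: leaf_pairs_def)

definition separated_pairs :: "'p stree \<times> 'p stree \<Rightarrow> ('p \<times> 'p) set" where
  "separated_pairs vw = leaf_pairs vw \<union> (leaf_pairs vw)\<inverse>"

lemma separated_pairs_swap: "separated_pairs (w, v) = separated_pairs (v, w)"
  by (auto simp: separated_pairs_def)

lemma ck_pairs_subtrees:
  "(x, y) \<in> set (ck_pairs s v w) \<Longrightarrow> ck_sep s x y \<and> x \<in> subtrees v \<and> y \<in> subtrees w"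
  by (induction s v w rule: ck_pairs.induct) (auto split: if_splits)

lemma exact_cover_ck_pairs:
  "distinct (leaves v) \<Longrightarrow> distinct (leaves w) \<Longrightarrow>
    exact_cover leaf_pairs (set (ck_pairs s v w)) (pts v \<times> pts w)"
proof (induction s v w rule: ck_pairs.induct)
  case (1 s p q)
  then show ?case using exact_cover_singleton[of leaf_pairs "(Leaf p, Leaf q)"] by simp
next
  case (2 s p wl wr)
  have "{p} \<times> pts wl \<inter> {p} \<times> pts wr = {}"
    using "2.prems" by auto
  with 2 exact_cover_Un[of leaf_pairs "set (ck_pairs s (Leaf p) wl)" "{p} \<times> pts wl"
      "set (ck_pairs s (Leaf p) wr)" "{p} \<times> pts wr"]
    exact_cover_singleton[of leaf_pairs "(Leaf p, Node wl wr)"]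
  show ?case by (simp add: Sigma_Un_distrib2)
next
  case (3 s vl vr q)
  have "pts vl \<times> {q} \<inter> pts vr \<times> {q} = {}"
    using "3.prems" by auto
  with 3 exact_cover_Un[of leaf_pairs "set (ck_pairs s vl (Leaf q))" "pts vl \<times> {q}"
      "set (ck_pairs s vr (Leaf q))" "pts vr \<times> {q}"]
    exact_cover_singleton[of leaf_pairs "(Node vl vr, Leaf q)"]
  show ?case by (simp add: Sigma_Un_distrib1)
next
  case (4 s vl vr wl wr)
  let ?v = "Node vl vr" and ?w = "Node wl wr"
  have "pts ?v \<times> pts wl \<inter> pts ?v \<times> pts wr = {}" "pts vl \<times> pts ?w \<inter> pts vr \<times> pts ?w = {}"
    using "4.prems" by auto
  with 4 exact_cover_Un[of leaf_pairs "set (ck_pairs s ?v wl)" "pts ?v \<times> pts wl"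
      "set (ck_pairs s ?v wr)" "pts ?v \<times> pts wr"]
    exact_cover_Un[of leaf_pairs "set (ck_pairs s vl ?w)" "pts vl \<times> pts ?w"
      "set (ck_pairs s vr ?w)" "pts vr \<times> pts ?w"]
    exact_cover_singleton[of leaf_pairs "(?v, ?w)"]
  show ?case by (simp add: Sigma_Un_distrib1 Sigma_Un_distrib2 Un_ac)
qed

lemma exact_cover_ck_pairs_separated:
  assumes "distinct (leaves v)" "distinct (leaves w)" "pts v \<inter> pts w = {}"
  shows "exact_cover separated_pairs (set (ck_pairs s v w)) (pts v \<times> pts w \<union> (pts v \<times> pts w)\<inverse>)"
proof -
  have "pts v \<times> pts w \<inter> (pts v \<times> pts w)\<inverse> = {}"
    using assms(3) by auto
  with exact_cover_symmetric[OF exact_cover_ck_pairs[OF assms(1,2)]] show ?thesis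
    by (simp add: separated_pairs_def[abs_def])
qed

lemma ck_wspd_subtrees:
  "(x, y) \<in> set (ck_wspd s T) \<Longrightarrow> ck_sep s x y \<and> x \<in> subtrees T \<and> y \<in> subtrees T"
  by (induction s T rule: ck_wspd.induct) (auto dest: ck_pairs_subtrees)

lemma exact_cover_ck_wspd:
  "distinct (leaves T) \<Longrightarrow> exact_cover separated_pairs (set (ck_wspd s T)) (pts T \<times> pts T - Id)"
proof (induction s T rule: ck_wspd.induct)
  case (1 s p)
  then show ?case by simp
next
  case (2 s l r)
  let ?lr = "pts l \<times> pts r \<union> (pts l \<times> pts r)\<inverse>"
  have "(pts l \<times> pts l - Id) \<inter> (pts r \<times> pts r - Id) = {}"
    "((pts l \<times> pts l - Id) \<union> (pts r \<times> pts r - Id)) \<inter> ?lr = {}"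
    using "2.prems" by auto
  then have "exact_cover separated_pairs (set (ck_wspd s l) \<union> set (ck_wspd s r) \<union> set (ck_pairs s l r))
      ((pts l \<times> pts l - Id) \<union> (pts r \<times> pts r - Id) \<union> ?lr)"
    using 2 exact_cover_ck_pairs_separated[of l r s] by (intro exact_cover_Un) auto
  moreover have "pts (Node l r) \<times> pts (Node l r) - Id = (pts l \<times> pts l - Id) \<union> (pts r \<times> pts r - Id) \<union> ?lr"
    using "2.prems" by auto
  ultimately show ?case
    by (simp add: Un_assoc)
qed

lemma ck_wspd_disjoint:
  assumes "distinct (leaves T)" "(x, y) \<in> set (ck_wspd s T)"
  shows "pts x \<inter> pts y = {}"
  using exact_cover_ck_wspd[OF assms(1)] assms(2)
  unfolding exact_cover_def separated_pairs_def by fastforce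

lemma ck_wspd_split_tree:
  assumes "is_split_tree F T" "(v, w) \<in> set (ck_wspd s T)"
  shows "pts v \<subseteq> F" "pts w \<subseteq> F" "pts v \<inter> pts w = {}"
    "distinct (leaves v)" "distinct (leaves w)" "ck_sep s v w"
  using assms ck_wspd_subtrees[OF assms(2)] ck_wspd_disjoint[OF _ assms(2)] pts_subtree distinct_leaves_subtree
  by (auto simp: is_split_tree_def)

lemma find_pairs_Leaf:
  "find_pairs s k (Leaf z) = (if snd k \<le> dist (fst k) z then [Leaf z] else [])"
  by (subst find_pairs.simps) simp

lemma find_pairs_Node:
  "find_pairs s k (Node l r) =
    (if (3 * s + 4) * crad (Node l r) \<le> dist (fst k) (bcenter (pts (Node l r))) - (0 + crad (Node l r)) - snd k
     then [Node l r] else find_pairs s k l @ find_pairs s k r)"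
  by (subst find_pairs.simps) simp

declare find_pairs.simps [simp del]

lemma find_pairs_subtrees:
  "x \<in> set (find_pairs s k w) \<Longrightarrow>
    x \<in> subtrees w \<and> (3 * s + 4) * crad x \<le> dist (fst k) (bcenter (pts x)) - (0 + crad x) - snd k"
  by (induction w) (auto simp: find_pairs_Leaf find_pairs_Node split: if_splits)

text \<open>A leaf passes the FindPairs test iff its point lies outside the query ball,
  so no point is dropped.\<close>

lemma exact_cover_find_pairs:
  "distinct (leaves w) \<Longrightarrow> \<forall>z\<in>pts w. snd k \<le> dist (fst k) z \<Longrightarrow>
    exact_cover pts (set (find_pairs s k w)) (pts w)"
proof (induction w)
  case (Leaf z)
  then show ?case
    using exact_cover_singleton[of pts "Leaf z"] by (simp add: find_pairs_Leaf)
next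
  case (Node l r)
  then show ?case
    using exact_cover_singleton[of pts "Node l r"]
      exact_cover_Un[of pts "set (find_pairs s k l)" "pts l" "set (find_pairs s k r)" "pts r"]
    by (simp add: find_pairs_Node)
qed

section \<open>From pairs of nodes to pairs of balls\<close>

lemma radius_less_dist_center:
  assumes "cball (fst p) (snd p) \<inter> cball (fst q) (snd q) = {}" "0 \<le> snd q"
  shows "snd p < dist (fst p) (fst q)"
proof -
  have "fst q \<notin> cball (fst p) (snd p)"
    using assms by auto
  then show ?thesis by (simp add: mem_cball)
qed

lemma balls_of_subset: "balls_of D X \<subseteq> D"
  by (auto simp: balls_of_def)

lemma mem_balls_of: "b \<in> balls_of D X \<longleftrightarrow> b \<in> D \<and> fst b \<in> X"
  by (simp add: balls_of_def)

lemma fst_image_balls_of: "X \<subseteq> fst ` D \<Longrightarrow> fst ` balls_of D X = X"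
  by (auto simp: balls_of_def)

lemma card_balls_of: "inj_on fst D \<Longrightarrow> X \<subseteq> fst ` D \<Longrightarrow> card (balls_of D X) = card X"
  by (metis balls_of_subset card_image fst_image_balls_of inj_on_subset)

lemma balls_of_singleton: "inj_on fst D \<Longrightarrow> p \<in> D \<Longrightarrow> balls_of D {fst p} = {p}"
  by (auto simp: balls_of_def inj_on_def)

lemma the_ball_eq: "inj_on fst D \<Longrightarrow> p \<in> D \<Longrightarrow> pts v = {fst p} \<Longrightarrow> the_ball D v = p"
  unfolding the_ball_def by (rule the_equality) (auto simp: inj_on_def)

lemma vimage_fst_off_diagonal:
  fixes D :: "('a \<times> 'b) set"
  assumes "inj_on fst D"
  shows "map_prod fst fst -` (fst ` D \<times> fst ` D - Id) \<inter> D \<times> D = D \<times> D - Id"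
proof (rule set_eqI)
  fix pq :: "('a \<times> 'b) \<times> ('a \<times> 'b)"
  obtain p q where "pq = (p, q)" by (cases pq)
  then show "pq \<in> map_prod fst fst -` (fst ` D \<times> fst ` D - Id) \<inter> D \<times> D \<longleftrightarrow> pq \<in> D \<times> D - Id"
    using inj_on_eq_iff[OF assms, of p q] by (auto simp del: prod.collapse split_paired_all)
qed

lemma pts_singletonE:
  assumes "card (pts v) = 1" "pts v \<subseteq> fst ` D"
  obtains p where "p \<in> D" "pts v = {fst p}"
  using assms by (metis card_1_singletonE image_iff insert_subset)

definition upair_pairs :: "'b set uprod \<Rightarrow> ('b \<times> 'b) set" where
  "upair_pairs u = {(p, q). \<exists>A B. u = Upair A B \<and> p \<in> A \<and> q \<in> B}"

lemma upair_pairs_Upair: "upair_pairs (Upair A B) = A \<times> B \<union> (A \<times> B)\<inverse>"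
  by (auto simp: upair_pairs_def Upair_inject)

fun ball_pair :: "('a \<times> real) set \<Rightarrow> 'a stree \<times> 'a stree \<Rightarrow> ('a \<times> real) set uprod" where
  "ball_pair D (x, y) = Upair (balls_of D (pts x)) (balls_of D (pts y))"

lemma upair_pairs_ball_pair:
  "upair_pairs (ball_pair D xy) = map_prod fst fst -` separated_pairs xy \<inter> D \<times> D"
  by (cases xy) (auto simp: upair_pairs_Upair separated_pairs_def mem_balls_of)

lemma is_wspd_ball_pair_image:
  assumes inj: "inj_on fst D" and cover: "exact_cover separated_pairs R (fst ` D \<times> fst ` D - Id)"
    and ws: "\<And>x y. (x, y) \<in> R \<Longrightarrow> ball_ws s (balls_of D (pts x)) (balls_of D (pts y))"
  shows "is_wspd D s (ball_pair D ` R)"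
  unfolding is_wspd_def
proof (intro conjI ballI impI)
  fix u assume "u \<in> ball_pair D ` R"
  then obtain x y where "(x, y) \<in> R" "u = ball_pair D (x, y)"
    by auto
  with ws show "\<exists>A B. u = Upair A B \<and> A \<subseteq> D \<and> B \<subseteq> D \<and> ball_ws s A B"
    by (intro exI[of _ "balls_of D (pts x)"] exI[of _ "balls_of D (pts y)"]) (simp add: balls_of_subset)
next
  have "exact_cover (\<lambda>xy. map_prod fst fst -` separated_pairs xy \<inter> D \<times> D) R
      (map_prod fst fst -` (fst ` D \<times> fst ` D - Id) \<inter> D \<times> D)"
    using cover by (rule exact_cover_vimage)
  then have "exact_cover upair_pairs (ball_pair D ` R) (D \<times> D - Id)"
    by (intro exact_cover_image) (simp add: comp_def upair_pairs_ball_pair vimage_fst_off_diagonal[OF inj])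
  moreover fix p q assume "p \<in> D" "q \<in> D" "p \<noteq> q"
  ultimately have "\<exists>!u. u \<in> ball_pair D ` R \<and> (p, q) \<in> upair_pairs u"
    unfolding exact_cover_def by blast
  then show "\<exists>!u. u \<in> ball_pair D ` R \<and> (\<exists>A B. u = Upair A B \<and> p \<in> A \<and> q \<in> B)"
    by (simp only: upair_pairs_def mem_Collect_eq case_prod_conv)
qed

fun refined_pairs ::
    "('a::euclidean_space \<times> real) set \<Rightarrow> real \<Rightarrow> 'a stree \<times> 'a stree \<Rightarrow> ('a stree \<times> 'a stree) set"
  where
  "refined_pairs D s (v, w) =
    (if card (pts v) = 1 \<and> 1 < card (pts w) then Pair v ` set (find_pairs s (the_ball D v) w)
     else if card (pts w) = 1 \<and> 1 < card (pts v) then Pair w ` set (find_pairs s (the_ball D w) v)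
     else {(v, w)})"

lemma balls_of_the_ball:
  assumes "inj_on fst D" "card (pts v) = 1" "pts v \<subseteq> fst ` D"
  shows "balls_of D (pts v) = {the_ball D v}"
  using assms by (metis pts_singletonE balls_of_singleton the_ball_eq)

lemma compute_wspd_subset:
  assumes "inj_on fst D" "pts T \<subseteq> fst ` D"
  shows "compute_wspd D s T \<subseteq> ball_pair D ` (\<Union>(refined_pairs D s ` set (ck_wspd (3 * s + 6) T)))"
    (is "_ \<subseteq> ball_pair D ` (\<Union>(refined_pairs D s ` ?CK))")
proof
  have single: "{the_ball D v} = balls_of D (pts v)"
    if "(v, w) \<in> ?CK \<or> (w, v) \<in> ?CK" "card (pts v) = 1" for v w
    using that assms ck_wspd_subtrees pts_subtree by (metis balls_of_the_ball order_trans)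
  fix u assume "u \<in> compute_wspd D s T"
  then consider
      (balanced) v w where "(v, w) \<in> ?CK" "u = ball_pair D (v, w)"
        "(card (pts v) = 1 \<and> card (pts w) = 1) \<or> (1 < card (pts v) \<and> 1 < card (pts w))"
    | (left) v w x where "(v, w) \<in> ?CK" "card (pts v) = 1" "1 < card (pts w)"
        "x \<in> set (find_pairs s (the_ball D v) w)" "u = Upair {the_ball D v} (balls_of D (pts x))"
    | (right) v w x where "(v, w) \<in> ?CK" "card (pts w) = 1" "1 < card (pts v)"
        "x \<in> set (find_pairs s (the_ball D w) v)" "u = Upair {the_ball D w} (balls_of D (pts x))"
    unfolding compute_wspd_def Let_def by auto
  then show "u \<in> ball_pair D ` (\<Union>(refined_pairs D s ` ?CK))"
  proof cases
    case balanced
    then have "(v, w) \<in> refined_pairs D s (v, w)" by auto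
    with balanced show ?thesis by blast
  next
    case left
    then have "u = ball_pair D (v, x)" "(v, x) \<in> refined_pairs D s (v, w)"
      using single[of v w] by simp_all
    with left(1) show ?thesis by blast
  next
    case right
    then have "u = ball_pair D (w, x)" "(w, x) \<in> refined_pairs D s (v, w)"
      using single[of w v] by simp_all
    with right(1) show ?thesis by blast
  qed
qed

lemma ball_pair_image_subset:
  assumes "inj_on fst D" "pts T \<subseteq> fst ` D"
  shows "ball_pair D ` (\<Union>(refined_pairs D s ` set (ck_wspd (3 * s + 6) T))) \<subseteq> compute_wspd D s T"
    (is "ball_pair D ` (\<Union>(refined_pairs D s ` ?CK)) \<subseteq> _")
proof
  have single: "{the_ball D v} = balls_of D (pts v)"
    if "(v, w) \<in> ?CK \<or> (w, v) \<in> ?CK" "card (pts v) = 1" for v w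
    using that assms ck_wspd_subtrees pts_subtree by (metis balls_of_the_ball order_trans)
  fix u assume "u \<in> ball_pair D ` (\<Union>(refined_pairs D s ` ?CK))"
  then obtain v w xy where vw: "(v, w) \<in> ?CK" "xy \<in> refined_pairs D s (v, w)" "u = ball_pair D xy"
    by auto
  consider (left) "card (pts v) = 1" "1 < card (pts w)" | (right) "card (pts w) = 1" "1 < card (pts v)"
    | (balanced) "(card (pts v) = 1 \<and> card (pts w) = 1) \<or> (1 < card (pts v) \<and> 1 < card (pts w))"
    using card_pts_ge_1[of v] card_pts_ge_1[of w] by linarith
  then show "u \<in> compute_wspd D s T"
  proof cases
    case left
    with vw obtain x where "x \<in> set (find_pairs s (the_ball D v) w)"
      "u = Upair {the_ball D v} (balls_of D (pts x))"
      using single[of v w] by auto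
    with left vw(1) show ?thesis
      unfolding compute_wspd_def Let_def by blast
  next
    case right
    with vw obtain x where "x \<in> set (find_pairs s (the_ball D w) v)"
      "u = Upair {the_ball D w} (balls_of D (pts x))"
      using single[of w v] by auto
    with right vw(1) show ?thesis
      unfolding compute_wspd_def Let_def by blast
  next
    case balanced
    with vw have "u = Upair (balls_of D (pts v)) (balls_of D (pts w))"
      by auto
    with balanced vw(1) show ?thesis
      unfolding compute_wspd_def Let_def by blast
  qed
qed

context
  fixes D :: "('a::euclidean_space \<times> real) set"
  assumes radius_nonneg: "\<forall>b\<in>D. 0 \<le> snd b"
    and disjoint_balls: "\<forall>b\<in>D. \<forall>b'\<in>D. b \<noteq> b' \<longrightarrow> cball (fst b) (snd b) \<inter> cball (fst b') (snd b') = {}"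
begin

lemma radius_less_dist: "p \<in> D \<Longrightarrow> q \<in> D \<Longrightarrow> p \<noteq> q \<Longrightarrow> snd p < dist (fst p) (fst q)"
  using radius_less_dist_center radius_nonneg disjoint_balls by blast

lemma inj_on_fst: "inj_on fst D"
  by (rule inj_onI) (metis dist_self not_le radius_less_dist radius_nonneg)

lemma ball_ws_singleton_node:
  assumes "p \<in> D" "pts y \<subseteq> fst ` D" "fst p \<notin> pts y" "0 \<le> s"
    and far: "(3 * s + 4) * crad y \<le> dist (fst p) (bcenter (pts y)) - (0 + crad y) - snd p"
  shows "ball_ws s {p} (balls_of D (pts y))"
proof (cases "card (pts y) = 1")
  case True
  then obtain q where "q \<in> D" "pts y = {fst q}"
    using pts_singletonE assms(2) by blast
  with assms(1,3) show ?thesis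
    by (simp add: balls_of_singleton[OF inj_on_fst] ball_ws_singletons)
next
  case False
  then have "1 < card (pts y)"
    using card_pts_ge_1[of y] by linarith
  with assms show ?thesis
    by (intro ball_ws_singleton_far[where cb="bcenter (pts y)" and \<rho>="crad y"])
      (auto simp: card_balls_of[OF inj_on_fst] fst_image_balls_of rbox_subset_cball_crad crad_pos radius_nonneg)
qed

lemma ball_ws_ck_sep:
  assumes "pts v \<subseteq> fst ` D" "pts w \<subseteq> fst ` D" "pts v \<inter> pts w = {}" "ck_sep (3 * s + 6) v w" "0 \<le> s"
    and "(card (pts v) = 1 \<and> card (pts w) = 1) \<or> (1 < card (pts v) \<and> 1 < card (pts w))"
  shows "ball_ws s (balls_of D (pts v)) (balls_of D (pts w))"
  using assms(6)
proof
  assume "card (pts v) = 1 \<and> card (pts w) = 1"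
  then obtain p q where "p \<in> D" "pts v = {fst p}" "q \<in> D" "pts w = {fst q}"
    using pts_singletonE assms(1,2) by metis
  with assms(3) show ?thesis
    by (simp add: balls_of_singleton[OF inj_on_fst] ball_ws_singletons)
next
  assume card: "1 < card (pts v) \<and> 1 < card (pts w)"
  define \<rho> where "\<rho> = max (crad v) (crad w)"
  have "rbox (pts v) \<subseteq> cball (bcenter (pts v)) \<rho>" "rbox (pts w) \<subseteq> cball (bcenter (pts w)) \<rho>"
    using rbox_subset_cball_crad cball_subset_cball_iff unfolding \<rho>_def by fastforce+
  moreover have "(3 * s + 6) * \<rho> \<le> dist (bcenter (pts v)) (bcenter (pts w)) - (\<rho> + \<rho>)"
    using assms(4) unfolding ck_sep_def \<rho>_def Let_def by simp
  moreover have "0 < \<rho>"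
    using crad_pos card unfolding \<rho>_def by fastforce
  ultimately show ?thesis
    using assms card by (intro ball_ws_far) (auto simp: card_balls_of[OF inj_on_fst] fst_image_balls_of)
qed

lemma ball_ws_find_pairs:
  assumes "card (pts v) = 1" "pts v \<subseteq> fst ` D" "pts w \<subseteq> fst ` D" "pts v \<inter> pts w = {}" "0 \<le> s"
    and y: "y \<in> set (find_pairs s (the_ball D v) w)"
  shows "ball_ws s (balls_of D (pts v)) (balls_of D (pts y))"
proof -
  obtain p where p: "p \<in> D" "pts v = {fst p}"
    using pts_singletonE assms(1,2) by blast
  then have "the_ball D v = p" "balls_of D (pts v) = {p}"
    using the_ball_eq[OF inj_on_fst p] balls_of_singleton[OF inj_on_fst p(1)] p(2) by simp_all
  moreover have "y \<in> subtrees w"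
    and far: "(3 * s + 4) * crad y \<le> dist (fst p) (bcenter (pts y)) - (0 + crad y) - snd p"
    using find_pairs_subtrees[OF y] calculation(1) by simp_all
  then have "pts y \<subseteq> fst ` D" "fst p \<notin> pts y"
    using pts_subtree assms(3,4) p(2) by blast+
  ultimately show ?thesis
    using ball_ws_singleton_node[OF p(1) _ _ assms(5) far] by simp
qed

lemma ball_ws_refined_pairs:
  assumes "pts v \<subseteq> fst ` D" "pts w \<subseteq> fst ` D" "pts v \<inter> pts w = {}" "ck_sep (3 * s + 6) v w" "0 \<le> s"
    and xy: "(x, y) \<in> refined_pairs D s (v, w)"
  shows "ball_ws s (balls_of D (pts x)) (balls_of D (pts y))"
proof -
  show ?thesis
  proof (cases "card (pts v) = 1 \<and> 1 < card (pts w)")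
    case True
    with xy have "x = v" "y \<in> set (find_pairs s (the_ball D v) w)"
      by auto
    with True assms show ?thesis
      using ball_ws_find_pairs[of v w] by simp
  next
    case not_left: False
    show ?thesis
    proof (cases "card (pts w) = 1 \<and> 1 < card (pts v)")
      case True
      with xy not_left have "x = w" "y \<in> set (find_pairs s (the_ball D w) v)"
        by auto
      with True assms show ?thesis
        using ball_ws_find_pairs[of w v] by (simp add: Int_commute)
    next
      case False
      with xy not_left have "x = v" "y = w"
        by auto
      moreover have "(card (pts v) = 1 \<and> card (pts w) = 1) \<or> (1 < card (pts v) \<and> 1 < card (pts w))"
        using False not_left card_pts_ge_1[of v] card_pts_ge_1[of w] by linarith
      ultimately show ?thesis
        using ball_ws_ck_sep[OF assms(1-5)] by simp
    qed
  qed
qed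

lemma exact_cover_Pair_find_pairs:
  assumes "p \<in> D" "pts v = {fst p}" "pts w \<subseteq> fst ` D" "fst p \<notin> pts w" "distinct (leaves w)"
  shows "exact_cover separated_pairs (Pair v ` set (find_pairs s p w)) (separated_pairs (v, w))"
proof -
  have "\<forall>z\<in>pts w. snd p \<le> dist (fst p) z"
  proof
    fix z assume "z \<in> pts w"
    then obtain q where "q \<in> D" "z = fst q"
      using assms(3) by auto
    moreover have "q \<noteq> p"
      using assms(4) \<open>z \<in> pts w\<close> calculation(2) by auto
    ultimately show "snd p \<le> dist (fst p) z"
      using radius_less_dist[OF assms(1)] by fastforce
  qed
  then have "exact_cover (\<lambda>x. pts v \<times> pts x) (set (find_pairs s p w)) (pts v \<times> pts w)"
    using exact_cover_Times exact_cover_find_pairs assms(5) by blast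
  moreover have "pts v \<times> pts w \<inter> (pts v \<times> pts w)\<inverse> = {}"
    using assms(2,4) by auto
  ultimately have "exact_cover (separated_pairs \<circ> Pair v) (set (find_pairs s p w)) (separated_pairs (v, w))"
    using exact_cover_symmetric by (fastforce simp: separated_pairs_def comp_def)
  then show ?thesis
    by (rule exact_cover_image)
qed

lemma exact_cover_refined_pairs:
  assumes "pts v \<subseteq> fst ` D" "pts w \<subseteq> fst ` D" "pts v \<inter> pts w = {}"
    "distinct (leaves v)" "distinct (leaves w)"
  shows "exact_cover separated_pairs (refined_pairs D s (v, w)) (separated_pairs (v, w))"
proof -
  have "exact_cover separated_pairs (Pair v' ` set (find_pairs s (the_ball D v') w')) (separated_pairs (v', w'))"
    if v': "card (pts v') = 1" "pts v' \<subseteq> fst ` D"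
      and w': "pts w' \<subseteq> fst ` D" "pts v' \<inter> pts w' = {}" "distinct (leaves w')" for v' w'
  proof -
    obtain p where "p \<in> D" "pts v' = {fst p}"
      using pts_singletonE v' by blast
    with w' show ?thesis
      using the_ball_eq[OF inj_on_fst] exact_cover_Pair_find_pairs by auto
  qed
  from this[of v w] this[of w v] show ?thesis
    using assms by (simp add: separated_pairs_swap Int_commute)
qed

lemma exact_cover_refined_ck_wspd:
  assumes "is_split_tree (fst ` D) T"
  shows "exact_cover separated_pairs (\<Union>(refined_pairs D s ` set (ck_wspd (3 * s + 6) T)))
    (fst ` D \<times> fst ` D - Id)"
proof -
  have "pts T = fst ` D" "distinct (leaves T)"
    using assms by (auto simp: is_split_tree_def)
  then have "exact_cover separated_pairs (set (ck_wspd (3 * s + 6) T)) (fst ` D \<times> fst ` D - Id)"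
    using exact_cover_ck_wspd by metis
  then show ?thesis
  proof (rule exact_cover_UN)
    fix vw assume "vw \<in> set (ck_wspd (3 * s + 6) T)"
    moreover obtain v w where "vw = (v, w)"
      by fastforce
    ultimately show "exact_cover separated_pairs (refined_pairs D s vw) (separated_pairs vw)"
      using exact_cover_refined_pairs ck_wspd_split_tree[OF assms] by simp
  qed
qed

lemma ball_ws_refined_ck_wspd:
  assumes "is_split_tree (fst ` D) T" "0 \<le> s"
    and "(x, y) \<in> \<Union>(refined_pairs D s ` set (ck_wspd (3 * s + 6) T))"
  shows "ball_ws s (balls_of D (pts x)) (balls_of D (pts y))"
proof -
  obtain v w where vw: "(v, w) \<in> set (ck_wspd (3 * s + 6) T)" "(x, y) \<in> refined_pairs D s (v, w)"
    using assms(3) by auto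
  show ?thesis
    by (rule ball_ws_refined_pairs[OF ck_wspd_split_tree(1,2,3,6)[OF assms(1) vw(1)] assms(2) vw(2)])
qed

end

theorem lemma5:
  fixes D :: "('a::euclidean_space \<times> real) set" and s :: real and T :: "'a stree"
  assumes "finite D"
    and "\<forall>b\<in>D. snd b \<ge> 0"
    and "\<forall>b\<in>D. \<forall>b'\<in>D. b \<noteq> b' \<longrightarrow> cball (fst b) (snd b) \<inter> cball (fst b') (snd b') = {}"
    and "s > 0"
    and "is_split_tree (fst ` D) T"
  shows "is_wspd D s (compute_wspd D s T)"
proof -
  let ?R = "\<Union>(refined_pairs D s ` set (ck_wspd (3 * s + 6) T))"
  have inj: "inj_on fst D"
    by (rule inj_on_fst[OF assms(2,3)])
  have "pts T \<subseteq> fst ` D"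
    using assms(5) by (simp add: is_split_tree_def)
  then have "compute_wspd D s T = ball_pair D ` ?R"
    using compute_wspd_subset[OF inj] ball_pair_image_subset[OF inj] by (intro antisym)
  moreover have "is_wspd D s (ball_pair D ` ?R)"
    using ball_ws_refined_ck_wspd[OF assms(2,3,5)] assms(4)
    by (intro is_wspd_ball_pair_image[OF inj exact_cover_refined_ck_wspd[OF assms(2,3,5)]]) simp
  ultimately show ?thesis
    by simp
qed

end
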